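(* Let $(\Omega,\mathcal F,\mathbb P)$ and $u:\Omega\times\mathbb R\to\mathbb R$ satisfy: (i) for every $\omega$, $u(\omega,\cdot)$ is right continuous with left limits, nondecreasing, and $u(\omega,0)=0$; (ii) $u(\cdot,x)\in\mathcal L^1(\Omega,\mathcal F,\mathbb P)$ for every $x$; (iii) $T_u(f):=\int_\Omega u(\omega,f(\omega))\,\mathbb P(d\omega)$ is continuous from below on $\mathcal L^\infty(\Omega,\mathcal F)$ (i.e. $T_u(f_n)\to T_u(f)$ whenever $f_n(\omega)\uparrow f(\omega)$ for every $\omega$, all bounded measurable). Then there exists $\widehat u:\Omega\times\mathbb R\to\mathbb R$ with $\widehat u(\omega,\cdot)$ nondecreasing and continuous for every $\omega$, such that $E:=\{\omega: u(\omega,x)=\widehat u(\omega,x)\ \forall x\in\mathbb R\}\in\mathcal F$, $\mathbb P(E)=1$, and $T_u(f)=T_{\widehat u}(f)$ for every $f\in\mathcal L^\infty(\Omega,\mathcal F)$. Moreover, if $u(\omega,\cdot)$ is strictly increasing for every $\omega$, then $\widehat u(\omega,\cdot)$ can be taken strictly increasing for every $\omega$.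
   Context: $\mathcal L^\infty(\Omega,\mathcal F)$: bounded $\mathcal F$-measurable real functions; $T_{\widehat u}$ is defined analogously to $T_u$. *)

theory Defs
  imports "HOL-Probability.Probability"
begin

definition Linf :: "'a measure \<Rightarrow> ('a \<Rightarrow> real) set" where
  "Linf M = {f. f \<in> borel_measurable M \<and> (\<exists>c. \<forall>\<omega>\<in>space M. \<bar>f \<omega>\<bar> \<le> c)}"

definition T_fun :: "'a measure \<Rightarrow> ('a \<Rightarrow> real \<Rightarrow> real) \<Rightarrow> ('a \<Rightarrow> real) \<Rightarrow> real" where
  "T_fun M u f = (\<integral>\<omega>. u \<omega> (f \<omega>) \<partial>M)"

definition cont_from_below :: "'a measure \<Rightarrow> ('a \<Rightarrow> real \<Rightarrow> real) \<Rightarrow> bool" where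
  "cont_from_below M u \<longleftrightarrow>
     (\<forall>F f. (\<forall>n. F n \<in> Linf M) \<and> f \<in> Linf M \<and>
        (\<forall>\<omega>\<in>space M. incseq (\<lambda>n. F n \<omega>) \<and> (\<lambda>n. F n \<omega>) \<longlonglongrightarrow> f \<omega>)
        \<longrightarrow> (\<lambda>n. T_fun M u (F n)) \<longlonglongrightarrow> T_fun M u f)"

end

theory Submission
  imports Defs
begin

text \<open>
  A monotone function is continuous unless it has a left jump, and a jump of size at least
  \<open>c\<close> at a point \<open>x\<close> can be located measurably: \<open>x\<close> is the truncated generalised inverse of
  \<open>u \<omega>\<close> at a rational level between the two one-sided limits. For a bounded measurable \<open>f\<close>,
  continuity from below along \<open>f - 1/(n+1) \<up> f\<close> forces
  \<open>\<integral> u \<omega> (f \<omega>) - u \<omega> (f \<omega> - 1/(n+1)) \<partial>P \<rightarrow> 0\<close>, so jumps of size \<open>c\<close> at \<open>f \<omega>\<close> occur only on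
  a null set. Countably many choices of level, truncation and jump size therefore show that
  \<open>u \<omega>\<close> is continuous for almost every \<open>\<omega>\<close>; on the remaining null set replace \<open>u \<omega>\<close> by the
  identity, which changes no integral and keeps strict monotonicity.
\<close>

text \<open>The point \<open>m\<close> makes the infimum well defined, with value \<open>m\<close>, when \<open>g\<close> stays below \<open>y\<close>
  on \<open>[-m, m]\<close>.\<close>

definition lower_inverse :: "nat \<Rightarrow> (real \<Rightarrow> real) \<Rightarrow> real \<Rightarrow> real" where
  "lower_inverse m g y = Inf ({x. - real m \<le> x \<and> x \<le> real m \<and> y \<le> g x} \<union> {real m})"

lemma bdd_below_lower_inverse_set:
  "bdd_below ({x. - real m \<le> x \<and> x \<le> real m \<and> y \<le> g x} \<union> {real m})"
  by (rule bdd_belowI[of _ "- real m"]) auto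

lemma lower_inverse_bounds: "- real m \<le> lower_inverse m g y \<and> lower_inverse m g y \<le> real m"
  unfolding lower_inverse_def
  by (intro conjI cInf_greatest cInf_lower bdd_below_lower_inverse_set) auto

lemma le_at_lower_inverse:
  assumes mono: "mono g" and right_cont: "continuous (at_right (lower_inverse m g y)) g"
    and less: "lower_inverse m g y < real m"
  shows "y \<le> g (lower_inverse m g y)"
proof -
  let ?S = "{x. - real m \<le> x \<and> x \<le> real m \<and> y \<le> g x} \<union> {real m}"
  let ?x = "lower_inverse m g y"
  have above: "y \<le> g z" if "?x < z" for z
  proof -
    have "Inf ?S < min z (real m)" using that less unfolding lower_inverse_def by simp
    then obtain s where "s \<in> ?S" "s < min z (real m)"
      using cInf_less_iff[OF _ bdd_below_lower_inverse_set] by blast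
    then have "y \<le> g s" "s \<le> z" by auto
    then show ?thesis using mono by (meson monoD order_trans)
  qed
  have "(g \<longlongrightarrow> g ?x) (at_right ?x)" using right_cont by (simp add: continuous_within)
  moreover have "eventually (\<lambda>z. y \<le> g z) (at_right ?x)"
    unfolding eventually_at_filter by (intro always_eventually) (auto intro: above)
  ultimately show ?thesis by (rule tendsto_lowerbound) simp
qed

lemma lower_inverse_le_iff:
  assumes mono: "mono g" and right_cont: "\<And>x. continuous (at_right x) g"
    and t: "- real m \<le> t" "t < real m"
  shows "lower_inverse m g y \<le> t \<longleftrightarrow> y \<le> g t"
proof
  assume le: "lower_inverse m g y \<le> t"
  with t have "lower_inverse m g y < real m" by simp
  from le_at_lower_inverse[OF mono right_cont this] le mono show "y \<le> g t"
    by (meson monoD order_trans)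
next
  assume "y \<le> g t"
  then show "lower_inverse m g y \<le> t"
    unfolding lower_inverse_def using t by (intro cInf_lower bdd_below_lower_inverse_set) auto
qed

lemma lower_inverse_eqI:
  assumes "- real m \<le> x" "x \<le> real m" "y \<le> g x" "\<And>z. z < x \<Longrightarrow> g z < y"
  shows "lower_inverse m g y = x"
  unfolding lower_inverse_def
proof (rule cInf_eq_minimum)
  show "x \<in> {x. - real m \<le> x \<and> x \<le> real m \<and> y \<le> g x} \<union> {real m}" using assms by auto
next
  fix s assume s: "s \<in> {x. - real m \<le> x \<and> x \<le> real m \<and> y \<le> g x} \<union> {real m}"
  show "x \<le> s"
  proof (rule ccontr)
    assume "\<not> x \<le> s"
    then have "g s < y" using assms(4) by simp
    moreover have "y \<le> g s" using s \<open>\<not> x \<le> s\<close> assms(2) by auto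
    ultimately show False by simp
  qed
qed

lemma mono_tendsto_at_left:
  fixes g :: "real \<Rightarrow> real"
  assumes "mono g"
  shows "\<exists>l. (g \<longlongrightarrow> l) (at_left x)"
proof -
  have "(g \<longlongrightarrow> Sup (g ` ({..<x} \<inter> UNIV))) (at x within ({..<x} \<inter> UNIV))"
    by (rule Lim_left_bound[where K = "g x"]) (use assms in \<open>auto intro: monoD\<close>)
  then show ?thesis by auto
qed

lemma borel_measurable_lower_inverse:
  assumes meas: "\<And>x. (\<lambda>\<omega>. u \<omega> x) \<in> borel_measurable M"
    and mono: "\<And>\<omega>. \<omega> \<in> space M \<Longrightarrow> mono (u \<omega>)"
    and right_cont: "\<And>\<omega> x. \<omega> \<in> space M \<Longrightarrow> continuous (at_right x) (u \<omega>)"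
  shows "(\<lambda>\<omega>. lower_inverse m (u \<omega>) y) \<in> borel_measurable M"
  unfolding borel_measurable_iff_le
proof
  fix t
  consider "t < - real m" | "- real m \<le> t" "t < real m" | "real m \<le> t" by linarith
  then show "{\<omega> \<in> space M. lower_inverse m (u \<omega>) y \<le> t} \<in> sets M"
  proof cases
    case 1
    then have "{\<omega> \<in> space M. lower_inverse m (u \<omega>) y \<le> t} = {}"
      using lower_inverse_bounds[of m] by (auto simp: not_le intro: less_le_trans)
    then show ?thesis by (metis sets.empty_sets)
  next
    case 2
    then have "{\<omega> \<in> space M. lower_inverse m (u \<omega>) y \<le> t} = {\<omega> \<in> space M. y \<le> u \<omega> t}"
      using lower_inverse_le_iff[OF mono right_cont] by blast
    also have "\<dots> \<in> sets M" using meas[of t] by measurable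
    finally show ?thesis .
  next
    case 3
    then have "{\<omega> \<in> space M. lower_inverse m (u \<omega>) y \<le> t} = space M"
      using lower_inverse_bounds[of m] by (auto intro: order_trans)
    then show ?thesis by simp
  qed
qed

text \<open>Right continuity lets \<open>u \<omega> (f \<omega>)\<close> be approximated from above by \<open>u \<omega>\<close> evaluated on
  the countable dyadic grid, where measurability is that of each \<open>u \<cdot> x\<close>.\<close>

lemma borel_measurable_right_continuous_compose:
  fixes u :: "'a \<Rightarrow> real \<Rightarrow> real"
  assumes meas: "\<And>x. (\<lambda>\<omega>. u \<omega> x) \<in> borel_measurable M"
    and mono: "\<And>\<omega>. \<omega> \<in> space M \<Longrightarrow> mono (u \<omega>)"
    and right_cont: "\<And>\<omega> x. \<omega> \<in> space M \<Longrightarrow> continuous (at_right x) (u \<omega>)"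
    and f: "f \<in> borel_measurable M"
  shows "(\<lambda>\<omega>. u \<omega> (f \<omega>)) \<in> borel_measurable M"
proof (rule borel_measurable_LIMSEQ_real)
  let ?grid = "\<lambda>n \<omega>. real_of_int \<lceil>f \<omega> * 2 ^ n\<rceil> / 2 ^ n"
  show "(\<lambda>\<omega>. u \<omega> (?grid n \<omega>)) \<in> borel_measurable M" for n
  proof -
    have "(\<lambda>\<omega>. \<lceil>f \<omega> * 2 ^ n\<rceil>) \<in> M \<rightarrow>\<^sub>M count_space UNIV"
      using f by measurable
    then show ?thesis
      by (rule measurable_compose_countable[where f = "\<lambda>k \<omega>. u \<omega> (real_of_int k / 2 ^ n)", OF meas])
  qed
  fix \<omega> assume \<omega>: "\<omega> \<in> space M"
  let ?x = "f \<omega>"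
  have lower: "?x \<le> ?grid n \<omega>" for n
    using le_of_int_ceiling[of "?x * 2 ^ n"] by (simp add: pos_le_divide_eq)
  have upper: "?grid n \<omega> \<le> ?x + 1 / 2 ^ n" for n
  proof -
    have "real_of_int \<lceil>?x * 2 ^ n\<rceil> \<le> ?x * 2 ^ n + 1" by linarith
    then show ?thesis by (simp add: pos_divide_le_eq distrib_right)
  qed
  have "(\<lambda>n. ?x + 1 / 2 ^ n) \<longlonglongrightarrow> ?x + 0"
    by (intro tendsto_add tendsto_const LIMSEQ_divide_realpow_zero) auto
  then have "filterlim (\<lambda>n. ?x + 1 / 2 ^ n) (at_right ?x) sequentially"
    by (intro filterlim_at_withinI) auto
  moreover have "(u \<omega> \<longlongrightarrow> u \<omega> ?x) (at_right ?x)"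
    using right_cont[OF \<omega>] by (simp add: continuous_within)
  ultimately have from_above: "(\<lambda>n. u \<omega> (?x + 1 / 2 ^ n)) \<longlonglongrightarrow> u \<omega> ?x"
    by (rule filterlim_compose[rotated])
  show "(\<lambda>n. u \<omega> (?grid n \<omega>)) \<longlonglongrightarrow> u \<omega> ?x"
    by (rule tendsto_sandwich[OF _ _ tendsto_const from_above])
      (intro always_eventually allI monoD[OF mono[OF \<omega>]] lower upper)+
qed

locale right_continuous_integrand = prob_space M for M :: "'a measure" +
  fixes u :: "'a \<Rightarrow> real \<Rightarrow> real"
  assumes integrable_u: "\<And>x. integrable M (\<lambda>\<omega>. u \<omega> x)"
    and mono_u: "\<And>\<omega>. \<omega> \<in> space M \<Longrightarrow> mono (u \<omega>)"
    and right_cont_u: "\<And>\<omega> x. \<omega> \<in> space M \<Longrightarrow> continuous (at_right x) (u \<omega>)"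
begin

lemma borel_measurable_u: "(\<lambda>\<omega>. u \<omega> x) \<in> borel_measurable M"
  using integrable_u by (rule borel_measurable_integrable)

lemma borel_measurable_u_compose:
  "f \<in> borel_measurable M \<Longrightarrow> (\<lambda>\<omega>. u \<omega> (f \<omega>)) \<in> borel_measurable M"
  by (rule borel_measurable_right_continuous_compose[OF borel_measurable_u mono_u right_cont_u])

lemma integrable_u_compose:
  assumes f: "f \<in> Linf M"
  shows "integrable M (\<lambda>\<omega>. u \<omega> (f \<omega>))"
proof -
  obtain c where f_meas: "f \<in> borel_measurable M" and c: "\<And>\<omega>. \<omega> \<in> space M \<Longrightarrow> \<bar>f \<omega>\<bar> \<le> c"
    using f unfolding Linf_def by blast
  show ?thesis
  proof (rule Bochner_Integration.integrable_bound)
    show "integrable M (\<lambda>\<omega>. \<bar>u \<omega> (- c)\<bar> + \<bar>u \<omega> c\<bar>)"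
      by (intro Bochner_Integration.integrable_add integrable_abs integrable_u)
    show "(\<lambda>\<omega>. u \<omega> (f \<omega>)) \<in> borel_measurable M" by (rule borel_measurable_u_compose[OF f_meas])
    show "AE \<omega> in M. norm (u \<omega> (f \<omega>)) \<le> norm (\<bar>u \<omega> (- c)\<bar> + \<bar>u \<omega> c\<bar>)"
    proof (rule AE_I2)
      fix \<omega> assume \<omega>: "\<omega> \<in> space M"
      have "u \<omega> (- c) \<le> u \<omega> (f \<omega>)" "u \<omega> (f \<omega>) \<le> u \<omega> c"
        using c[OF \<omega>] monoD[OF mono_u[OF \<omega>]] by (auto simp: abs_le_iff)
      then show "norm (u \<omega> (f \<omega>)) \<le> norm (\<bar>u \<omega> (- c)\<bar> + \<bar>u \<omega> c\<bar>)" by simp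
    qed
  qed
qed

definition left_jump_set :: "('a \<Rightarrow> real) \<Rightarrow> real \<Rightarrow> 'a set" where
  "left_jump_set f c =
     {\<omega> \<in> space M. \<forall>n. c \<le> u \<omega> (f \<omega>) - u \<omega> (f \<omega> - inverse (real (Suc n)))}"

lemma left_jump_set_sets:
  assumes "f \<in> borel_measurable M"
  shows "left_jump_set f c \<in> sets M"
  unfolding left_jump_set_def
proof (rule sets.sets_Collect_countable_All)
  fix n
  have "(\<lambda>\<omega>. f \<omega> - inverse (real (Suc n))) \<in> borel_measurable M" using assms by measurable
  then show "{\<omega> \<in> space M. c \<le> u \<omega> (f \<omega>) - u \<omega> (f \<omega> - inverse (real (Suc n)))} \<in> sets M"
    using borel_measurable_u_compose assms by measurable
qed

lemma Linf_diff_const: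
  assumes "f \<in> Linf M"
  shows "(\<lambda>\<omega>. f \<omega> - d) \<in> Linf M"
proof -
  obtain c where "f \<in> borel_measurable M" "\<And>\<omega>. \<omega> \<in> space M \<Longrightarrow> \<bar>f \<omega>\<bar> \<le> c"
    using assms unfolding Linf_def by blast
  then show ?thesis
    unfolding Linf_def by (auto intro!: exI[of _ "c + \<bar>d\<bar>"] abs_triangle_ineq4[THEN order_trans])
qed

lemma measure_left_jump_set_le:
  assumes f: "f \<in> Linf M"
  shows "measure M (left_jump_set f c) * c
           \<le> T_fun M u f - T_fun M u (\<lambda>\<omega>. f \<omega> - inverse (real (Suc n)))"
proof -
  let ?J = "left_jump_set f c" and ?g = "\<lambda>\<omega>. f \<omega> - inverse (real (Suc n))"
  have J: "?J \<in> sets M" using f by (intro left_jump_set_sets) (simp add: Linf_def)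
  have int_f: "integrable M (\<lambda>\<omega>. u \<omega> (f \<omega>))" and int_g: "integrable M (\<lambda>\<omega>. u \<omega> (?g \<omega>))"
    using integrable_u_compose f Linf_diff_const by blast+
  have "measure M ?J * c = (\<integral>\<omega>. indicator ?J \<omega> * c \<partial>M)"
    using J sets.sets_into_space[OF J] by (simp add: Int_absorb2)
  also have "\<dots> \<le> (\<integral>\<omega>. u \<omega> (f \<omega>) - u \<omega> (?g \<omega>) \<partial>M)"
  proof (rule integral_mono)
    show "integrable M (\<lambda>\<omega>. indicator ?J \<omega> * c)"
      using J by (auto intro!: integrable_real_indicator simp: emeasure_eq_measure)
    show "integrable M (\<lambda>\<omega>. u \<omega> (f \<omega>) - u \<omega> (?g \<omega>))" using int_f int_g by simp
    fix \<omega> assume \<omega>: "\<omega> \<in> space M"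
    have "0 \<le> u \<omega> (f \<omega>) - u \<omega> (?g \<omega>)" using monoD[OF mono_u[OF \<omega>]] by simp
    then show "indicator ?J \<omega> * c \<le> u \<omega> (f \<omega>) - u \<omega> (?g \<omega>)"
      by (cases "\<omega> \<in> ?J") (auto simp: left_jump_set_def)
  qed
  also have "\<dots> = T_fun M u f - T_fun M u ?g"
    unfolding T_fun_def using int_f int_g by simp
  finally show ?thesis .
qed

lemma left_jump_set_null:
  assumes cfb: "cont_from_below M u" and f: "f \<in> Linf M" and c: "0 < c"
  shows "left_jump_set f c \<in> null_sets M"
proof -
  let ?F = "\<lambda>n \<omega>. f \<omega> - inverse (real (Suc n))"
  have "(\<lambda>n. ?F n \<omega>) \<longlonglongrightarrow> f \<omega> - 0" for \<omega>
    by (intro tendsto_diff tendsto_const LIMSEQ_inverse_real_of_nat)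
  moreover have "incseq (\<lambda>n. ?F n \<omega>)" for \<omega>
    by (intro incseq_SucI) (simp add: field_simps)
  ultimately have "(\<lambda>n. T_fun M u (?F n)) \<longlonglongrightarrow> T_fun M u f"
    using cfb f Linf_diff_const[OF f] unfolding cont_from_below_def by simp
  then have "(\<lambda>n. T_fun M u f - T_fun M u (?F n)) \<longlonglongrightarrow> T_fun M u f - T_fun M u f"
    by (intro tendsto_diff tendsto_const)
  then have "measure M (left_jump_set f c) * c \<le> 0"
    using measure_left_jump_set_le[OF f]
    by (intro tendsto_lowerbound[of _ 0]) (auto intro: always_eventually)
  then have "measure M (left_jump_set f c) = 0"
    using c by (simp add: mult_le_0_iff measure_nonneg order.antisym)
  moreover have "left_jump_set f c \<in> sets M" using f by (intro left_jump_set_sets) (simp add: Linf_def)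
  ultimately show ?thesis by (simp add: emeasure_eq_measure null_sets_def)
qed

lemma left_jump_set_not_isCont:
  assumes "\<omega> \<in> left_jump_set f c" and "0 < c"
  shows "\<not> isCont (u \<omega>) (f \<omega>)"
proof
  let ?x = "f \<omega>"
  assume "isCont (u \<omega>) ?x"
  moreover have "(\<lambda>n. ?x - inverse (real (Suc n))) \<longlonglongrightarrow> ?x - 0"
    by (intro tendsto_diff tendsto_const LIMSEQ_inverse_real_of_nat)
  ultimately have "(\<lambda>n. u \<omega> (?x - inverse (real (Suc n)))) \<longlonglongrightarrow> u \<omega> ?x"
    using isCont_tendsto_compose by fastforce
  then have "(\<lambda>n. u \<omega> ?x - u \<omega> (?x - inverse (real (Suc n)))) \<longlonglongrightarrow> u \<omega> ?x - u \<omega> ?x"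
    by (intro tendsto_diff tendsto_const)
  then have "c \<le> 0"
    using assms(1) unfolding left_jump_set_def
    by (intro tendsto_lowerbound[of _ 0]) (auto intro: always_eventually)
  with assms(2) show False by simp
qed

lemma discontinuous_in_left_jump_set:
  assumes \<omega>: "\<omega> \<in> space M" and x: "\<not> isCont (u \<omega>) x"
  shows "\<exists>q m k. \<omega> \<in> left_jump_set (\<lambda>\<omega>. lower_inverse m (u \<omega>) (of_rat q)) (inverse (real (Suc k)))"
proof -
  have mono: "mono (u \<omega>)" by (rule mono_u[OF \<omega>])
  obtain l where l: "(u \<omega> \<longlongrightarrow> l) (at_left x)" using mono_tendsto_at_left[OF mono] by blast
  have below: "u \<omega> z \<le> l" if "z < x" for z
  proof (rule tendsto_lowerbound[OF l])
    show "\<forall>\<^sub>F y in at_left x. u \<omega> z \<le> u \<omega> y"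
      using eventually_at_left_real[OF that] by eventually_elim (auto intro: monoD[OF mono])
  qed simp
  have "l \<le> u \<omega> x"
  proof (rule tendsto_upperbound[OF l])
    have "x - 1 < x" by simp
    from eventually_at_left_real[OF this] show "\<forall>\<^sub>F y in at_left x. u \<omega> y \<le> u \<omega> x"
      by eventually_elim (auto intro: monoD[OF mono])
  qed simp
  moreover have "l \<noteq> u \<omega> x"
    using x right_cont_u[OF \<omega>, of x] l continuous_at_split by (auto simp: continuous_within)
  ultimately have jump: "l < u \<omega> x" by simp
  obtain q where q: "l < of_rat q" "of_rat q < u \<omega> x"
    using Rats_dense_in_real[OF jump] by (auto elim: Rats_cases)
  obtain m :: nat where m: "\<bar>x\<bar> < real m" using reals_Archimedean2 by blast
  obtain k where k: "inverse (real (Suc k)) < u \<omega> x - l"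
    using reals_Archimedean[of "u \<omega> x - l"] jump by auto
  have "lower_inverse m (u \<omega>) (of_rat q) = x"
  proof (rule lower_inverse_eqI)
    show "- real m \<le> x" "x \<le> real m" using m by auto
    show "of_rat q \<le> u \<omega> x" using q by simp
    show "u \<omega> z < of_rat q" if "z < x" for z using q below[OF that] by simp
  qed
  moreover have "inverse (real (Suc k)) \<le> u \<omega> x - u \<omega> (x - inverse (real (Suc n)))" for n
    using below[of "x - inverse (real (Suc n))"] k by simp
  ultimately show ?thesis unfolding left_jump_set_def using \<omega> by auto
qed

lemma discontinuity_set_null:
  assumes cfb: "cont_from_below M u"
  shows "{\<omega> \<in> space M. \<not> continuous_on UNIV (u \<omega>)} \<in> null_sets M"
proof -
  let ?J = "\<lambda>(q, m, k). left_jump_set (\<lambda>\<omega>. lower_inverse m (u \<omega>) (of_rat q)) (inverse (real (Suc k)))"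
  have "{\<omega> \<in> space M. \<not> continuous_on UNIV (u \<omega>)} = (\<Union>i::rat \<times> nat \<times> nat. ?J i)"
  proof (intro equalityI subsetI)
    fix \<omega> assume "\<omega> \<in> {\<omega> \<in> space M. \<not> continuous_on UNIV (u \<omega>)}"
    then show "\<omega> \<in> (\<Union>i. ?J i)"
      using discontinuous_in_left_jump_set by (auto simp: continuous_on_eq_continuous_at)
  next
    fix \<omega> assume "\<omega> \<in> (\<Union>i. ?J i)"
    then show "\<omega> \<in> {\<omega> \<in> space M. \<not> continuous_on UNIV (u \<omega>)}"
      using left_jump_set_not_isCont
      by (force simp: continuous_on_eq_continuous_at left_jump_set_def)
  qed
  also have "\<dots> \<in> null_sets M"
  proof (intro null_sets_UN)
    fix i :: "rat \<times> nat \<times> nat"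
    obtain q m k where i: "i = (q, m, k)" by (cases i)
    have "\<bar>lower_inverse m (u \<omega>) (of_rat q)\<bar> \<le> real m" for \<omega>
      using lower_inverse_bounds[of m "u \<omega>" "of_rat q"] by (simp add: abs_le_iff)
    then have "(\<lambda>\<omega>. lower_inverse m (u \<omega>) (of_rat q)) \<in> Linf M"
      using borel_measurable_lower_inverse[OF borel_measurable_u mono_u right_cont_u]
      unfolding Linf_def by blast
    then show "?J i \<in> null_sets M" unfolding i by (auto intro: left_jump_set_null[OF cfb])
  qed
  finally show ?thesis .
qed

definition continuous_version :: "'a \<Rightarrow> real \<Rightarrow> real" where
  "continuous_version \<omega> = (if continuous_on UNIV (u \<omega>) then u \<omega> else id)"

lemma continuous_version_agree_iff:
  "(\<forall>x. u \<omega> x = continuous_version \<omega> x) \<longleftrightarrow> continuous_on UNIV (u \<omega>)"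
  by (auto simp: continuous_version_def fun_eq_iff[symmetric] intro: continuous_on_id)

lemma T_fun_continuous_version:
  assumes cfb: "cont_from_below M u" and f: "f \<in> Linf M"
  shows "T_fun M u f = T_fun M continuous_version f"
proof -
  let ?D = "{\<omega> \<in> space M. \<not> continuous_on UNIV (u \<omega>)}"
  have D: "?D \<in> null_sets M" by (rule discontinuity_set_null[OF cfb])
  have f_meas: "f \<in> borel_measurable M" using f by (simp add: Linf_def)
  have "(\<lambda>\<omega>. continuous_version \<omega> (f \<omega>))
          = (\<lambda>\<omega>. if continuous_on UNIV (u \<omega>) then u \<omega> (f \<omega>) else f \<omega>)"
    by (simp add: continuous_version_def fun_eq_iff)
  also have "\<dots> \<in> borel_measurable M"
  proof (rule measurable_If[OF borel_measurable_u_compose[OF f_meas] f_meas])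
    have "{\<omega> \<in> space M. continuous_on UNIV (u \<omega>)} = space M - ?D" by blast
    then show "{\<omega> \<in> space M. continuous_on UNIV (u \<omega>)} \<in> sets M" using D by auto
  qed
  finally have "(\<lambda>\<omega>. continuous_version \<omega> (f \<omega>)) \<in> borel_measurable M" .
  moreover have "AE \<omega> in M. u \<omega> (f \<omega>) = continuous_version \<omega> (f \<omega>)"
    using AE_not_in[OF D] by (rule AE_mp) (auto simp: continuous_version_def)
  ultimately show ?thesis
    unfolding T_fun_def using borel_measurable_u_compose[OF f_meas] by (intro integral_cong_AE)
qed

end

theorem mainTheorem15:
  fixes M :: "'a measure" and u :: "'a \<Rightarrow> real \<Rightarrow> real"
  assumes "prob_space M"
    and "\<forall>\<omega>\<in>space M. (\<forall>x. continuous (at_right x) (u \<omega>) \<and> (\<exists>l. (u \<omega> \<longlongrightarrow> l) (at_left x)))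
                      \<and> mono (u \<omega>) \<and> u \<omega> 0 = 0"
    and "\<forall>x. integrable M (\<lambda>\<omega>. u \<omega> x)"
    and "cont_from_below M u"
  shows "\<exists>uh :: 'a \<Rightarrow> real \<Rightarrow> real.
           (\<forall>\<omega>\<in>space M. mono (uh \<omega>) \<and> continuous_on UNIV (uh \<omega>)) \<and>
           {\<omega>\<in>space M. \<forall>x. u \<omega> x = uh \<omega> x} \<in> sets M \<and>
           measure M {\<omega>\<in>space M. \<forall>x. u \<omega> x = uh \<omega> x} = 1 \<and>
           (\<forall>f\<in>Linf M. T_fun M u f = T_fun M uh f) \<and>
           ((\<forall>\<omega>\<in>space M. strict_mono (u \<omega>)) \<longrightarrow> (\<forall>\<omega>\<in>space M. strict_mono (uh \<omega>)))"
proof -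
  interpret right_continuous_integrand M u
    using assms(1-3)
    by (simp add: right_continuous_integrand_def right_continuous_integrand_axioms_def)
  let ?D = "{\<omega> \<in> space M. \<not> continuous_on UNIV (u \<omega>)}"
  have D: "?D \<in> null_sets M" by (rule discontinuity_set_null[OF assms(4)])
  have "measure M ?D = 0" using D by (simp add: measure_def null_setsD1)
  then have measure_agree: "measure M (space M - ?D) = 1"
    using prob_compl[OF null_setsD2[OF D]] by simp
  have agree: "{\<omega> \<in> space M. \<forall>x. u \<omega> x = continuous_version \<omega> x} = space M - ?D"
    by (auto simp: continuous_version_agree_iff)
  show ?thesis
  proof (intro exI[of _ continuous_version] conjI ballI impI)
    show "mono (continuous_version \<omega>)" "continuous_on UNIV (continuous_version \<omega>)"
      if "\<omega> \<in> space M" for \<omega>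
      using mono_u[OF that] by (auto simp: continuous_version_def mono_def intro: continuous_on_id)
    show "{\<omega> \<in> space M. \<forall>x. u \<omega> x = continuous_version \<omega> x} \<in> sets M"
      unfolding agree using D by blast
    show "measure M {\<omega> \<in> space M. \<forall>x. u \<omega> x = continuous_version \<omega> x} = 1"
      unfolding agree by (rule measure_agree)
    show "T_fun M u f = T_fun M continuous_version f" if "f \<in> Linf M" for f
      using T_fun_continuous_version[OF assms(4) that] .
    show "strict_mono (continuous_version \<omega>)"
      if "\<forall>\<omega>\<in>space M. strict_mono (u \<omega>)" and "\<omega> \<in> space M" for \<omega>
      using that by (auto simp: continuous_version_def strict_mono_def)
  qed
qed

end
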